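(* Let $R$ be a suitable ring, and let $x_1,x_2,x_3\in R$ satisfy $x_1+x_2+x_3=1$, where $x_1$ is an idempotent. Then there exist pairwise orthogonal idempotents $e_1\in Rx_1$, $e_2\in Rx_2$, $e_3\in Rx_3$ such that $e_1+e_2+e_3=1$ and $x_1\sim e_1$.
   Context: A ring $R$ (associative with $1$) is suitable if whenever $x+y=1$ in $R$ there are orthogonal idempotents $e\in Rx$ and $f\in Ry$ with $e+f=1$. For idempotents $e,e'\in R$, write $e\sim e'$ ($e$ and $e'$ are left strongly isomorphic) if $e'e=e'$ and $ee'=e$. *)

theory Defs
  imports Main
begin

definition idem :: "'a::ring_1 \<Rightarrow> bool" where
  "idem e \<longleftrightarrow> e * e = e"

definition left_ideal_gen :: "'a::ring_1 \<Rightarrow> 'a set" where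
  "left_ideal_gen x = {r * x | r. True}"

definition suitable :: "'a::ring_1 itself \<Rightarrow> bool" where
  "suitable TYPE('a) \<longleftrightarrow>
     (\<forall>x y :: 'a. x + y = 1 \<longrightarrow>
        (\<exists>e f. idem e \<and> idem f \<and> e * f = 0 \<and> f * e = 0 \<and>
               e \<in> left_ideal_gen x \<and> f \<in> left_ideal_gen y \<and> e + f = 1))"

definition left_strong_iso :: "'a::ring_1 \<Rightarrow> 'a \<Rightarrow> bool" where
  "left_strong_iso e e' \<longleftrightarrow> e' * e = e' \<and> e * e' = e"

end

theory Submission
  imports Defs
begin

text \<open>Put \<open>q = 1 - x\<^sub>1\<close>. Suitability passes to the corner \<open>qRq\<close>, so
  \<open>q = q x\<^sub>2 q + q x\<^sub>3 q\<close> splits into orthogonal idempotents \<open>G \<in> R x\<^sub>2 q\<close> and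
  \<open>E \<in> R x\<^sub>3 q\<close> with \<open>G + E = q\<close>. Writing \<open>G = v x\<^sub>2 q\<close>, the element
  \<open>e\<^sub>2 = G v x\<^sub>2 \<in> R x\<^sub>2\<close> satisfies \<open>q e\<^sub>2 = e\<^sub>2\<close> and \<open>e\<^sub>2 q = G\<close>, and likewise for
  \<open>e\<^sub>3\<close>; these relations transfer idempotence and orthogonality from \<open>G, E\<close>
  to \<open>e\<^sub>2, e\<^sub>3\<close>. Finally \<open>e\<^sub>1 = 1 - e\<^sub>2 - e\<^sub>3\<close> is annihilated by \<open>q\<close> on the right,
  which gives \<open>x\<^sub>1 \<sim> e\<^sub>1\<close> and hence \<open>e\<^sub>1 \<in> R x\<^sub>1\<close>.\<close>

lemma left_ideal_gen_iff: "y \<in> left_ideal_gen x \<longleftrightarrow> (\<exists>r. y = r * x)"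
  by (auto simp: left_ideal_gen_def)

lemma mult_in_left_ideal_gen [simp]: "r * x \<in> left_ideal_gen x"
  by (auto simp: left_ideal_gen_iff)

lemma left_ideal_gen_mult_left:
  "z \<in> left_ideal_gen (y * x) \<Longrightarrow> z \<in> left_ideal_gen x"
  by (auto simp: left_ideal_gen_iff mult.assoc[symmetric])

lemma left_strong_iso_imp_left_ideal_gen:
  "left_strong_iso x e \<Longrightarrow> e \<in> left_ideal_gen x"
  by (metis left_strong_iso_def mult_in_left_ideal_gen)

lemma idem_one_minus: "idem p \<Longrightarrow> idem (1 - p)"
  by (simp add: idem_def algebra_simps)

lemma suitable_corner:
  fixes a b q :: "'a::ring_1"
  assumes "suitable TYPE('a)" and "idem q" and "a + b = q" and "a * q = a"
  shows "\<exists>G E. idem G \<and> idem E \<and> G * E = 0 \<and> E * G = 0 \<and>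
           G \<in> left_ideal_gen a \<and> E \<in> left_ideal_gen b \<and> G + E = q"
proof -
  have "a + (1 - a) = 1" by simp
  then obtain g f where "idem g" and g: "g \<in> left_ideal_gen a"
      and f: "f \<in> left_ideal_gen (1 - a)" and "g + f = 1"
    using assms(1) unfolding suitable_def by blast
  obtain r where r: "g = r * a" using g by (auto simp: left_ideal_gen_iff)
  obtain s where s: "f = s * (1 - a)" using f by (auto simp: left_ideal_gen_iff)
  have qq: "q * q = q" using \<open>idem q\<close> by (simp add: idem_def)
  have gq: "g * q = g" by (simp add: r mult.assoc assms(4))
  define G where "G = q * g"
  define E where "E = q - G"
  have GG: "G * G = G"
    by (metis G_def \<open>idem g\<close> idem_def gq mult.assoc)
  have qG: "q * G = G" by (simp add: G_def qq mult.assoc[symmetric])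
  have Gq: "G * q = G" by (simp add: G_def gq mult.assoc)
  have "idem E" and "G * E = 0" and "E * G = 0"
    using GG qG Gq qq by (simp_all add: idem_def E_def algebra_simps)
  moreover have "G \<in> left_ideal_gen a"
    by (simp add: G_def r mult.assoc[symmetric])
  moreover have "E \<in> left_ideal_gen b"
  proof -
    have f_eq: "f = 1 - g" using \<open>g + f = 1\<close> by (simp add: eq_diff_eq add.commute)
    have "E = q * f * q"
      using Gq qq by (simp add: E_def G_def f_eq algebra_simps)
    also have "\<dots> = q * s * ((1 - a) * q)" by (simp add: s mult.assoc)
    also have "(1 - a) * q = b" using assms(3,4) qq by (simp add: algebra_simps)
    finally show ?thesis by simp
  qed
  ultimately show ?thesis
    using GG by (intro exI[of _ G] exI[of _ E]) (simp add: idem_def E_def)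
qed

lemma corner_idem_lift:
  assumes "idem G" and "q * G = G" and "G \<in> left_ideal_gen (x * q)"
  obtains e where "e \<in> left_ideal_gen x" and "q * e = e" and "e * q = G" and "G * e = e"
proof -
  obtain v where v: "G = v * (x * q)" using assms(3) by (auto simp: left_ideal_gen_iff)
  have GG: "G * G = G" using assms(1) by (simp add: idem_def)
  show thesis
  proof
    show "G * v * x \<in> left_ideal_gen x" by simp
    show "q * (G * v * x) = G * v * x" by (simp add: assms(2) mult.assoc[symmetric])
    show "G * v * x * q = G" by (simp add: mult.assoc GG flip: v)
    show "G * (G * v * x) = G * v * x" by (simp add: GG mult.assoc[symmetric])
  qed
qed

lemma lift_idem:
  assumes "q * e = e" and "e * q = G" and "G * e = e"
  shows "idem e"
proof -
  have "e * e = (e * q) * e" by (simp add: mult.assoc assms(1))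
  then show ?thesis using assms(2,3) by (simp add: idem_def)
qed

lemma lift_orthogonal:
  fixes e e' q G E :: "'a::ring_1"
  assumes "e * q = G" and "q * e' = e'" and "E * e' = e'" and "G * E = 0"
  shows "e * e' = 0"
proof -
  have "e * e' = (e * q) * (E * e')" by (simp add: mult.assoc assms(2,3))
  also have "\<dots> = (G * E) * e'" by (simp add: mult.assoc assms(1))
  finally show ?thesis using assms(4) by simp
qed

lemma idem_one_minus_orthogonal_pair:
  assumes "idem e" and "idem e'" and "e * e' = 0" and "e' * e = 0"
  shows "idem (1 - e - e')" and "(1 - e - e') * e = 0" and "e * (1 - e - e') = 0"
    and "(1 - e - e') * e' = 0" and "e' * (1 - e - e') = 0"
  using assms by (simp_all add: idem_def algebra_simps)

lemma left_strong_iso_one_minus: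
  assumes "idem p" and "(1 - p) * e = e" and "e * (1 - p) = 1 - p"
  shows "left_strong_iso p (1 - e)"
proof -
  have "p * e = 0"
    by (metis assms(1,2) idem_def mult.assoc right_diff_distrib
        mult.right_neutral diff_self mult_zero_left)
  moreover have "e * p = e - 1 + p" using assms(3) by (simp add: algebra_simps)
  ultimately show ?thesis
    using assms(1) by (simp add: left_strong_iso_def idem_def algebra_simps)
qed

theorem lemma2:
  fixes x1 x2 x3 :: "'a::ring_1"
  assumes "suitable TYPE('a)"
    and "x1 + x2 + x3 = 1"
    and "idem x1"
  shows "\<exists>e1 e2 e3. idem e1 \<and> idem e2 \<and> idem e3 \<and>
           e1 * e2 = 0 \<and> e2 * e1 = 0 \<and> e1 * e3 = 0 \<and> e3 * e1 = 0 \<and>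
           e2 * e3 = 0 \<and> e3 * e2 = 0 \<and>
           e1 \<in> left_ideal_gen x1 \<and> e2 \<in> left_ideal_gen x2 \<and> e3 \<in> left_ideal_gen x3 \<and>
           e1 + e2 + e3 = 1 \<and> left_strong_iso x1 e1"
proof -
  define q where "q = 1 - x1"
  have "idem q" using assms(3) by (simp add: q_def idem_one_minus)
  then have qq: "q * q = q" by (simp add: idem_def)
  have "x2 + x3 = q" using assms(2) by (simp add: q_def algebra_simps)
  then have "q * x2 * q + q * x3 * q = q"
    using qq by (metis distrib_left distrib_right mult.assoc)
  moreover have "q * x2 * q * q = q * x2 * q" using qq by (simp add: mult.assoc)
  ultimately obtain G E where GE: "idem G" "idem E" "G * E = 0" "E * G = 0"
      and "G \<in> left_ideal_gen (q * (x2 * q))" "E \<in> left_ideal_gen (q * (x3 * q))"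
      and "G + E = q"
    using suitable_corner[OF assms(1) \<open>idem q\<close>] by (metis mult.assoc)
  moreover have "q * G = G" "q * E = E"
    using GE by (simp_all add: idem_def distrib_right flip: \<open>G + E = q\<close>)
  ultimately obtain e2 e3 where e2: "e2 \<in> left_ideal_gen x2" "q * e2 = e2" "e2 * q = G" "G * e2 = e2"
      and e3: "e3 \<in> left_ideal_gen x3" "q * e3 = e3" "e3 * q = E" "E * e3 = e3"
    by (metis corner_idem_lift left_ideal_gen_mult_left)
  have "idem e2" "idem e3" "e2 * e3 = 0" "e3 * e2 = 0"
    using e2 e3 \<open>G * E = 0\<close> \<open>E * G = 0\<close> by (auto intro: lift_idem lift_orthogonal)
  moreover have "left_strong_iso x1 (1 - (e2 + e3))"
    using e2 e3 \<open>G + E = q\<close> by (intro left_strong_iso_one_minus[OF assms(3)])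
      (simp_all add: q_def[symmetric] distrib_left distrib_right)
  ultimately show ?thesis
    using e2(1) e3(1) idem_one_minus_orthogonal_pair[of e2 e3]
    by (intro exI[of _ "1 - e2 - e3"] exI[of _ e2] exI[of _ e3])
      (simp add: diff_diff_eq left_strong_iso_imp_left_ideal_gen)
qed

end
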